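(* Let $f$ be a homeomorphism of a compact manifold $M$ whose non-wandering set is all of $M$. Let $M_1\to M$ be a finite cover and let $g:M_1\to M_1$ be a lift of an iterate $f^k$ ($k\ge1$) of $f$. Then the non-wandering set of $g$ is all of $M_1$.
   Context: The non-wandering set of a homeomorphism $\phi$ of $X$ is the set of $x$ such that for every neighbourhood $U$ of $x$ there is $n>0$ with $\phi^n(U)\cap U\neq\emptyset$. *)

theory Defs
  imports "HOL-Analysis.Analysis"
begin

definition locally_euclidean :: "'a topology \<Rightarrow> nat \<Rightarrow> bool" where
  "locally_euclidean X n \<longleftrightarrow>
     (\<forall>x \<in> topspace X. \<exists>U V. openin X U \<and> x \<in> U \<and> openin (Euclidean_space n) V \<and>
        subtopology X U homeomorphic_space subtopology (Euclidean_space n) V)"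

definition topological_manifold :: "'a topology \<Rightarrow> bool" where
  "topological_manifold X \<longleftrightarrow>
     Hausdorff_space X \<and> second_countable X \<and> (\<exists>n. locally_euclidean X n)"

definition finite_covering_map :: "'b topology \<Rightarrow> 'a topology \<Rightarrow> ('b \<Rightarrow> 'a) \<Rightarrow> bool" where
  "finite_covering_map E X p \<longleftrightarrow>
     continuous_map E X p \<and> p ` topspace E = topspace X \<and>
     (\<forall>x \<in> topspace X. finite {e \<in> topspace E. p e = x}) \<and>
     (\<forall>x \<in> topspace X. \<exists>U. openin X U \<and> x \<in> U \<and>
        (\<exists>\<V>. \<Union>\<V> = {e \<in> topspace E. p e \<in> U} \<and> pairwise disjnt \<V> \<and>
             (\<forall>V \<in> \<V>. openin E V \<and> homeomorphic_map (subtopology E V) (subtopology X U) p)))"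

definition non_wandering_set :: "'a topology \<Rightarrow> ('a \<Rightarrow> 'a) \<Rightarrow> 'a set" where
  "non_wandering_set X \<phi> =
     {x \<in> topspace X. \<forall>U. openin X U \<and> x \<in> U \<longrightarrow> (\<exists>n>0. (\<phi> ^^ n) ` U \<inter> U \<noteq> {})}"

end

theory Submission
  imports Defs
begin

(* Let W be a nonempty open subset of M1 meeting a sheet V over an evenly covered open set U of M,
   and put Q = p(W \<inter> V). Since h = f^k is non-wandering, every nonempty open Q \<subseteq> U contains a
   nonempty open Q' with h^n(Q') \<subseteq> Q for some n > 0; shrinking Q' further, g^n maps the part of
   each of the finitely many sheets over Q' into a single sheet over Q, and this map of sheets is a
   permutation because g is injective. Iterating gives times T 0 < T 1 < ... together with
   permutations of the sheets; by pigeonhole two of these permutations agree, and the difference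
   of the corresponding times brings a point of W back into W. That f^k is non-wandering is the
   same statement for the trivial k-sheeted cover M \<times> {0..<k} with the lift
   (x, i) \<mapsto> (f x, i + 1 mod k). *)

lemma non_wandering_set_eq_topspace_iff:
  "non_wandering_set X \<phi> = topspace X \<longleftrightarrow>
     (\<forall>W. openin X W \<longrightarrow> W \<noteq> {} \<longrightarrow> (\<exists>n>0. (\<phi> ^^ n) ` W \<inter> W \<noteq> {}))"
proof
  assume all: "non_wandering_set X \<phi> = topspace X"
  show "\<forall>W. openin X W \<longrightarrow> W \<noteq> {} \<longrightarrow> (\<exists>n>0. (\<phi> ^^ n) ` W \<inter> W \<noteq> {})"
  proof (intro allI impI)
    fix W assume W: "openin X W" "W \<noteq> {}"
    then obtain x where "x \<in> W"
      by blast
    then have "x \<in> non_wandering_set X \<phi>"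
      using all openin_subset[OF W(1)] by blast
    then show "\<exists>n>0. (\<phi> ^^ n) ` W \<inter> W \<noteq> {}"
      using W(1) \<open>x \<in> W\<close> unfolding non_wandering_set_def by blast
  qed
qed (auto simp: non_wandering_set_def)

lemma funpow_image_subset: "f ` S \<subseteq> S \<Longrightarrow> (f ^^ n) ` S \<subseteq> S"
  by (induction n) auto

lemma inj_on_funpow:
  assumes "inj_on f S" and "f ` S \<subseteq> S"
  shows "inj_on (f ^^ n) S"
proof (induction n)
  case (Suc n)
  have "inj_on f ((f ^^ n) ` S)"
    using inj_on_subset[OF assms(1) funpow_image_subset[OF assms(2)]] .
  then show ?case
    unfolding funpow.simps by (rule comp_inj_on[OF Suc.IH])
qed simp

lemma funpow_semiconj:
  assumes "g ` S \<subseteq> S" and "\<forall>y\<in>S. p (g y) = h (p y)" and "y \<in> S"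
  shows "p ((g ^^ n) y) = (h ^^ n) (p y)"
proof (induction n)
  case (Suc n)
  have "(g ^^ n) y \<in> S"
    using assms(1,3) funpow_image_subset by blast
  then show ?case
    using assms(2) Suc.IH by simp
qed simp

lemma continuous_map_funpow:
  assumes "continuous_map X X f"
  shows "continuous_map X X (f ^^ n)"
proof (induction n)
  case (Suc n)
  show ?case
    unfolding funpow.simps by (rule continuous_map_compose[OF Suc.IH assms])
qed simp

lemma non_wandering_return:
  assumes "non_wandering_set X h = topspace X" and "continuous_map X X h"
    and "openin X Q" and "Q \<noteq> {}"
  obtains n Q1 where "n > 0" and "openin X Q1" and "Q1 \<noteq> {}" and "Q1 \<subseteq> Q"
    and "(h ^^ n) ` Q1 \<subseteq> Q"
proof -
  obtain n where "n > 0" and "(h ^^ n) ` Q \<inter> Q \<noteq> {}"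
    using assms(1,3,4) unfolding non_wandering_set_eq_topspace_iff by blast
  define Q1 where "Q1 = Q \<inter> {x \<in> topspace X. (h ^^ n) x \<in> Q}"
  have "openin X Q1"
    unfolding Q1_def
    by (intro openin_Int openin_continuous_map_preimage[OF continuous_map_funpow[OF assms(2)]] assms(3))
  moreover have "Q1 \<noteq> {}"
    using \<open>(h ^^ n) ` Q \<inter> Q \<noteq> {}\<close> openin_subset[OF assms(3)] unfolding Q1_def by blast
  moreover have "Q1 \<subseteq> Q" and "(h ^^ n) ` Q1 \<subseteq> Q"
    unfolding Q1_def by auto
  ultimately show thesis
    using \<open>n > 0\<close> that by blast
qed

lemma pigeonhole_maps_finite_set:
  assumes "finite S" and "\<And>i. i \<le> card (S \<rightarrow>\<^sub>E S) \<Longrightarrow> \<rho> i ` S \<subseteq> S"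
  obtains a b where "a < b" and "b \<le> card (S \<rightarrow>\<^sub>E S)" and "\<forall>s\<in>S. \<rho> a s = \<rho> b s"
proof -
  let ?N = "card (S \<rightarrow>\<^sub>E S)"
  have "\<rho> i s \<in> S" if "i \<le> ?N" and "s \<in> S" for i s
    using assms(2)[OF that(1)] that(2) by blast
  then have into: "(\<lambda>i. restrict (\<rho> i) S) ` {..?N} \<subseteq> S \<rightarrow>\<^sub>E S"
    by (auto simp: restrict_PiE_iff)
  have "\<not> inj_on (\<lambda>i. restrict (\<rho> i) S) {..?N}"
  proof
    assume "inj_on (\<lambda>i. restrict (\<rho> i) S) {..?N}"
    then have "card {..?N} \<le> ?N"
      using into finite_PiE[OF assms(1) assms(1)] by (rule card_inj_on_le)
    then show False
      by simp
  qed
  then obtain a b where "a < b" "b \<le> ?N" and "restrict (\<rho> a) S = restrict (\<rho> b) S"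
    unfolding inj_on_def by (metis atMost_iff less_imp_le_nat linorder_neqE_nat)
  then show thesis
    using that by (metis restrict_apply')
qed

lemma finite_disjoint_family_meeting_finite_set:
  assumes "finite F" and "pairwise disjnt \<V>" and "\<And>V. V \<in> \<V> \<Longrightarrow> V \<inter> F \<noteq> {}"
  shows "finite \<V>"
proof -
  have "inj_on (\<lambda>V. V \<inter> F) \<V>"
  proof (rule inj_onI)
    fix V1 V2 assume V: "V1 \<in> \<V>" "V2 \<in> \<V>" and "V1 \<inter> F = V2 \<inter> F"
    then have "\<not> disjnt V1 V2"
      using assms(3) unfolding disjnt_def by blast
    then show "V1 = V2"
      using assms(2) V unfolding pairwise_def by blast
  qed
  moreover have "finite ((\<lambda>V. V \<inter> F) ` \<V>)"
    by (rule finite_subset[of _ "Pow F"]) (auto simp: assms(1))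
  ultimately show ?thesis
    using finite_imageD by blast
qed

lemma homeomorphic_map_open_subtopologies:
  assumes "openin E V" and "openin X U" and hom: "homeomorphic_map (subtopology E V) (subtopology X U) p"
  shows "p ` V = U" and "inj_on p V" and "\<And>A. openin E A \<Longrightarrow> A \<subseteq> V \<Longrightarrow> openin X (p ` A)"
proof -
  have V: "topspace (subtopology E V) = V" and U: "topspace (subtopology X U) = U"
    using assms(1,2) openin_subset by auto
  show "p ` V = U"
    using homeomorphic_imp_surjective_map[OF hom] V U by simp
  show "inj_on p V"
    using homeomorphic_imp_injective_map[OF hom] V by simp
  fix A assume "openin E A" "A \<subseteq> V"
  then have "openin (subtopology E V) A"
    unfolding openin_subtopology by blast
  then have "openin (subtopology X U) (p ` A)"
    using homeomorphic_map_openness[OF hom] openin_subset by blast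
  then show "openin X (p ` A)"
    using openin_trans_full assms(2) by blast
qed

lemma homeomorphic_map_fst_discrete_sing:
  "homeomorphic_map (prod_topology X (discrete_topology {b})) X fst"
  by (simp add: homeomorphic_map_def inj_on_def discrete_topology_unique flip: homeomorphic_map_maps)

lemma finite_covering_map_fst_discrete:
  assumes "finite S" and "S \<noteq> {}"
  shows "finite_covering_map (prod_topology X (discrete_topology S)) X fst"
  unfolding finite_covering_map_def
proof (intro conjI ballI)
  let ?Y = "prod_topology X (discrete_topology S)"
  show "continuous_map ?Y X fst"
    by (rule continuous_map_fst)
  show "fst ` topspace ?Y = topspace X"
    using assms(2) by auto
  fix x assume "x \<in> topspace X"
  show "finite {e \<in> topspace ?Y. fst e = x}"
    by (rule finite_subset[of _ "{x} \<times> S"]) (auto simp: assms(1))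
  define \<V> where "\<V> = (\<lambda>i. topspace X \<times> {i}) ` S"
  have "homeomorphic_map (subtopology ?Y (topspace X \<times> {i})) (subtopology X (topspace X)) fst"
    if "i \<in> S" for i
  proof -
    have "subtopology ?Y (topspace X \<times> {i}) = prod_topology X (discrete_topology {i})"
      using that by (simp flip: prod_topology_subtopology(2))
    then show ?thesis
      using homeomorphic_map_fst_discrete_sing by simp
  qed
  then have "homeomorphic_map (subtopology ?Y V) (subtopology X (topspace X)) fst" if "V \<in> \<V>" for V
    using that unfolding \<V>_def by blast
  moreover have "openin ?Y V" if "V \<in> \<V>" for V
    using that unfolding \<V>_def by (auto simp: openin_prod_Times_iff)
  moreover have "\<Union>\<V> = {e \<in> topspace ?Y. fst e \<in> topspace X}"
    unfolding \<V>_def by auto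
  moreover have "pairwise disjnt \<V>"
    unfolding \<V>_def pairwise_def disjnt_def by auto
  ultimately show "\<exists>U. openin X U \<and> x \<in> U \<and> (\<exists>\<V>. \<Union>\<V> = {e \<in> topspace ?Y. fst e \<in> U} \<and> pairwise disjnt \<V> \<and>
        (\<forall>V\<in>\<V>. openin ?Y V \<and> homeomorphic_map (subtopology ?Y V) (subtopology X U) fst))"
    using \<open>x \<in> topspace X\<close>
    by (intro exI[of _ "topspace X"] exI[of _ \<V>] conjI openin_topspace) auto
qed

locale evenly_covered =
  fixes Y :: "'b topology" and X :: "'a topology" and p :: "'b \<Rightarrow> 'a"
    and U :: "'a set" and \<V> :: "'b set set"
  assumes open_base: "openin X U"
    and finite_sheets: "finite \<V>"
    and disjoint_sheets: "pairwise disjnt \<V>"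
    and sheets_cover: "\<Union>\<V> = {e \<in> topspace Y. p e \<in> U}"
    and openin_sheet: "V \<in> \<V> \<Longrightarrow> openin Y V"
    and sheet_image: "V \<in> \<V> \<Longrightarrow> p ` V = U"
    and inj_on_sheet: "V \<in> \<V> \<Longrightarrow> inj_on p V"
    and openin_image_in_sheet: "V \<in> \<V> \<Longrightarrow> openin Y A \<Longrightarrow> A \<subseteq> V \<Longrightarrow> openin X (p ` A)"

lemma finite_covering_map_evenly_covered:
  assumes cover: "finite_covering_map Y X p" and "x \<in> topspace X"
  obtains U \<V> where "x \<in> U" and "evenly_covered Y X p U \<V>"
proof -
  have fibres: "\<forall>x\<in>topspace X. finite {e \<in> topspace Y. p e = x}"
    and evenly: "\<forall>x\<in>topspace X. \<exists>U. openin X U \<and> x \<in> U \<and>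
        (\<exists>\<V>. \<Union>\<V> = {e \<in> topspace Y. p e \<in> U} \<and> pairwise disjnt \<V> \<and>
             (\<forall>V \<in> \<V>. openin Y V \<and> homeomorphic_map (subtopology Y V) (subtopology X U) p))"
    using cover unfolding finite_covering_map_def by blast+
  obtain U \<V> where "openin X U" "x \<in> U" and cov: "\<Union>\<V> = {e \<in> topspace Y. p e \<in> U}"
    and "pairwise disjnt \<V>"
    and sheets: "\<forall>V\<in>\<V>. openin Y V \<and> homeomorphic_map (subtopology Y V) (subtopology X U) p"
    using bspec[OF evenly \<open>x \<in> topspace X\<close>] by (elim exE conjE) (rule that)
  have sheet: "openin Y V" "p ` V = U" "inj_on p V" "\<And>A. openin Y A \<Longrightarrow> A \<subseteq> V \<Longrightarrow> openin X (p ` A)"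
    if "V \<in> \<V>" for V
    using sheets that homeomorphic_map_open_subtopologies[OF _ \<open>openin X U\<close>, of Y V p] by auto
  have "finite \<V>"
  proof (rule finite_disjoint_family_meeting_finite_set)
    show "finite {e \<in> topspace Y. p e = x}"
      using fibres \<open>x \<in> topspace X\<close> by blast
    show "V \<inter> {e \<in> topspace Y. p e = x} \<noteq> {}" if V: "V \<in> \<V>" for V
    proof -
      obtain e where "e \<in> V" "p e = x"
        using sheet(2)[OF V] \<open>x \<in> U\<close> by (metis imageE)
      then show ?thesis
        using openin_subset[OF sheet(1)[OF V]] by blast
    qed
  qed fact
  then have "evenly_covered Y X p U \<V>"
    using \<open>openin X U\<close> \<open>pairwise disjnt \<V>\<close> cov sheet by unfold_locales
  with \<open>x \<in> U\<close> show thesis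
    by (rule that)
qed

locale evenly_covered_semiconjugacy = evenly_covered Y X p U \<V>
  for Y :: "'b topology" and X :: "'a topology" and p U \<V> +
  fixes g :: "'b \<Rightarrow> 'b" and h :: "'a \<Rightarrow> 'a"
  assumes continuous_g: "continuous_map Y Y g" and inj_g: "inj_on g (topspace Y)"
    and semiconj: "\<forall>y\<in>topspace Y. p (g y) = h (p y)"
    and continuous_h: "continuous_map X X h"
    and non_wandering_h: "non_wandering_set X h = topspace X"
begin

definition nonempty_open_subset :: "'a set \<Rightarrow> bool" where
  "nonempty_open_subset Q \<longleftrightarrow> openin X Q \<and> Q \<noteq> {} \<and> Q \<subseteq> U"

definition sheet_transition :: "'a set \<Rightarrow> nat \<Rightarrow> ('b set \<Rightarrow> 'b set) \<Rightarrow> 'a set \<Rightarrow> bool" where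
  "sheet_transition Q' n \<pi> Q \<longleftrightarrow>
     (\<forall>V\<in>\<V>. \<forall>e\<in>V. p e \<in> Q' \<longrightarrow> (g ^^ n) e \<in> \<pi> V \<and> p ((g ^^ n) e) \<in> Q)"

lemma g_image_subset: "g ` topspace Y \<subseteq> topspace Y"
  by (rule continuous_map_image_subset_topspace[OF continuous_g])

lemma funpow_g_in_topspace: "e \<in> topspace Y \<Longrightarrow> (g ^^ n) e \<in> topspace Y"
  using funpow_image_subset[OF g_image_subset] by blast

lemma p_funpow_g: "e \<in> topspace Y \<Longrightarrow> p ((g ^^ n) e) = (h ^^ n) (p e)"
  by (rule funpow_semiconj[OF g_image_subset semiconj])

lemma sheet_subset_topspace: "V \<in> \<V> \<Longrightarrow> V \<subseteq> topspace Y"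
  using openin_sheet openin_subset by blast

lemma sheet_containing:
  assumes "e \<in> topspace Y" and "p e \<in> U"
  obtains V where "V \<in> \<V>" and "e \<in> V"
  using assms sheets_cover by blast

lemma sheet_eq_if_funpow_same_sheet:
  assumes "V1 \<in> \<V>" "V2 \<in> \<V>" "V \<in> \<V>" and "e1 \<in> V1" "e2 \<in> V2" "p e1 = p e2"
    and "(g ^^ n) e1 \<in> V" "(g ^^ n) e2 \<in> V"
  shows "V1 = V2"
proof -
  have e: "e1 \<in> topspace Y" "e2 \<in> topspace Y"
    using assms(1,2,4,5) sheet_subset_topspace by blast+
  then have "p ((g ^^ n) e1) = p ((g ^^ n) e2)"
    using p_funpow_g assms(6) by simp
  then have "(g ^^ n) e1 = (g ^^ n) e2"
    using inj_on_sheet[OF assms(3)] assms(7,8) by (simp add: inj_on_def)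
  then have "e1 = e2"
    using inj_on_funpow[OF inj_g g_image_subset] e by (simp add: inj_on_def)
  then show ?thesis
    using disjoint_sheets assms(1,2,4,5) unfolding pairwise_def disjnt_def by blast
qed

definition carried_into :: "nat \<Rightarrow> ('b set \<Rightarrow> 'b set) \<Rightarrow> 'a set" where
  "carried_into n \<pi> = {x \<in> U. \<forall>V\<in>\<V>. \<forall>e\<in>V. p e = x \<longrightarrow> (g ^^ n) e \<in> \<pi> V}"

lemma exists_sheet_permutation_at:
  assumes "x \<in> U" and "(h ^^ n) x \<in> U"
  obtains \<pi> where "bij_betw \<pi> \<V> \<V>" and "x \<in> carried_into n \<pi>"
proof -
  have "\<forall>V\<in>\<V>. \<exists>e. e \<in> V \<and> p e = x"
    using sheet_image assms(1) by blast
  then obtain e where e: "\<forall>V\<in>\<V>. e V \<in> V \<and> p (e V) = x"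
    by metis
  have "\<exists>V'\<in>\<V>. (g ^^ n) (e V) \<in> V'" if "V \<in> \<V>" for V
  proof -
    have eV: "e V \<in> topspace Y"
      using e that sheet_subset_topspace by blast
    moreover have "p ((g ^^ n) (e V)) \<in> U"
      using p_funpow_g[OF eV] e that assms(2) by auto
    ultimately show ?thesis
      using sheet_containing funpow_g_in_topspace by metis
  qed
  then obtain \<pi> where \<pi>: "\<forall>V\<in>\<V>. \<pi> V \<in> \<V> \<and> (g ^^ n) (e V) \<in> \<pi> V"
    by metis
  have "inj_on \<pi> \<V>"
    using \<pi> e sheet_eq_if_funpow_same_sheet by (intro inj_onI) metis
  then have "bij_betw \<pi> \<V> \<V>"
    using \<pi> endo_inj_surj[OF finite_sheets] unfolding bij_betw_def by blast
  moreover have "e' = e V" if "V \<in> \<V>" "e' \<in> V" "p e' = x" for V e'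
    using that e inj_on_sheet unfolding inj_on_def by metis
  then have "x \<in> carried_into n \<pi>"
    unfolding carried_into_def using assms(1) \<pi> by auto
  ultimately show thesis
    by (rule that)
qed

lemma openin_image_sheet_funpow_preimage:
  assumes "V \<in> \<V>" and "V' \<in> \<V>"
  shows "openin X (p ` (V \<inter> {z \<in> topspace Y. (g ^^ n) z \<in> V'}))"
proof -
  have "openin Y (V \<inter> {z \<in> topspace Y. (g ^^ n) z \<in> V'})"
    using assms
    by (intro openin_Int openin_sheet openin_continuous_map_preimage[OF continuous_map_funpow[OF continuous_g]])
  then show ?thesis
    using openin_image_in_sheet[OF assms(1)] by blast
qed

lemma openin_carried_into:
  assumes "\<pi> ` \<V> \<subseteq> \<V>"
  shows "openin X (carried_into n \<pi>)"
proof -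
  define A where "A V = V \<inter> {z \<in> topspace Y. (g ^^ n) z \<in> \<pi> V}" for V
  have iff: "x \<in> p ` A V \<longleftrightarrow> (\<forall>e\<in>V. p e = x \<longrightarrow> (g ^^ n) e \<in> \<pi> V)"
    if "V \<in> \<V>" and "x \<in> U" for V x
  proof -
    obtain e where e: "e \<in> V" "p e = x"
      using \<open>V \<in> \<V>\<close> \<open>x \<in> U\<close> sheet_image by blast
    have unique: "e' = e" if "e' \<in> V" "p e' = x" for e'
      using that e inj_on_sheet[OF \<open>V \<in> \<V>\<close>] unfolding inj_on_def by metis
    show ?thesis
    proof
      assume "x \<in> p ` A V"
      then obtain a where "a \<in> A V" "p a = x"
        by blast
      then show "\<forall>e\<in>V. p e = x \<longrightarrow> (g ^^ n) e \<in> \<pi> V"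
        using unique unfolding A_def by blast
    next
      assume "\<forall>e\<in>V. p e = x \<longrightarrow> (g ^^ n) e \<in> \<pi> V"
      then have "e \<in> A V"
        using e sheet_subset_topspace[OF \<open>V \<in> \<V>\<close>] unfolding A_def by blast
      then show "x \<in> p ` A V"
        using e(2) by blast
    qed
  qed
  have "carried_into n \<pi> = U \<inter> \<Inter> ((\<lambda>V. p ` A V) ` \<V>)"
    unfolding carried_into_def by (auto simp: iff)
  also have "openin X \<dots>"
  proof (rule openin_Int_Inter)
    show "finite ((\<lambda>V. p ` A V) ` \<V>)"
      using finite_sheets by simp
    show "openin X U"
      using open_base by blast
    show "openin X S" if S: "S \<in> (\<lambda>V. p ` A V) ` \<V>" for S
      using S assms openin_image_sheet_funpow_preimage unfolding A_def by blast
  qed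
  finally show ?thesis .
qed

lemma exists_sheet_permutation:
  assumes "nonempty_open_subset Q" and "(h ^^ n) ` Q \<subseteq> U"
  obtains Q' \<pi> where "nonempty_open_subset Q'" and "Q' \<subseteq> Q" and "bij_betw \<pi> \<V> \<V>"
    and "\<forall>V\<in>\<V>. \<forall>e\<in>V. p e \<in> Q' \<longrightarrow> (g ^^ n) e \<in> \<pi> V"
proof -
  obtain x where "x \<in> Q" and "x \<in> U"
    using assms(1) unfolding nonempty_open_subset_def by blast
  then obtain \<pi> where "bij_betw \<pi> \<V> \<V>" and "x \<in> carried_into n \<pi>"
    using exists_sheet_permutation_at assms(2) by blast
  moreover have "openin X (Q \<inter> carried_into n \<pi>)"
    using assms(1) openin_carried_into[of \<pi> n] \<open>bij_betw \<pi> \<V> \<V>\<close>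
    unfolding nonempty_open_subset_def bij_betw_def by blast
  ultimately have "nonempty_open_subset (Q \<inter> carried_into n \<pi>)"
    using \<open>x \<in> Q\<close> assms(1) unfolding nonempty_open_subset_def by blast
  moreover have "\<forall>V\<in>\<V>. \<forall>e\<in>V. p e \<in> Q \<inter> carried_into n \<pi> \<longrightarrow> (g ^^ n) e \<in> \<pi> V"
    unfolding carried_into_def by blast
  ultimately show thesis
    using that \<open>bij_betw \<pi> \<V> \<V>\<close> by blast
qed

lemma exists_sheet_transition:
  assumes "nonempty_open_subset Q"
  obtains Q' n \<pi> where "nonempty_open_subset Q'" and "Q' \<subseteq> Q" and "n > 0" and "bij_betw \<pi> \<V> \<V>"
    and "sheet_transition Q' n \<pi> Q"
proof -
  obtain n Q1 where "n > 0" and Q1: "openin X Q1" "Q1 \<noteq> {}" "Q1 \<subseteq> Q" and "(h ^^ n) ` Q1 \<subseteq> Q"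
    using non_wandering_return[OF non_wandering_h continuous_h] assms unfolding nonempty_open_subset_def by metis
  then have "nonempty_open_subset Q1" and "(h ^^ n) ` Q1 \<subseteq> U"
    using assms unfolding nonempty_open_subset_def by auto
  then obtain Q' \<pi> where "nonempty_open_subset Q'" "Q' \<subseteq> Q1" "bij_betw \<pi> \<V> \<V>"
    and \<pi>: "\<forall>V\<in>\<V>. \<forall>e\<in>V. p e \<in> Q' \<longrightarrow> (g ^^ n) e \<in> \<pi> V"
    by (rule exists_sheet_permutation)
  have "p ((g ^^ n) e) \<in> Q" if "V \<in> \<V>" "e \<in> V" "p e \<in> Q'" for V e
  proof -
    have "p ((g ^^ n) e) = (h ^^ n) (p e)"
      using that(1,2) sheet_subset_topspace p_funpow_g by blast
    then show ?thesis
      using that(3) \<open>Q' \<subseteq> Q1\<close> \<open>(h ^^ n) ` Q1 \<subseteq> Q\<close> by auto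
  qed
  with \<pi> have "sheet_transition Q' n \<pi> Q"
    unfolding sheet_transition_def by blast
  with \<open>nonempty_open_subset Q'\<close> \<open>Q' \<subseteq> Q1\<close> \<open>n > 0\<close> \<open>bij_betw \<pi> \<V> \<V>\<close> show thesis
    using that Q1(3) by blast
qed

lemma sheet_transition_id: "Q' \<subseteq> Q \<Longrightarrow> sheet_transition Q' 0 id Q"
  unfolding sheet_transition_def by auto

lemma sheet_transition_comp:
  assumes "sheet_transition Q'' m \<tau> Q'" and "sheet_transition Q' n \<pi> Q" and "\<tau> ` \<V> \<subseteq> \<V>"
  shows "sheet_transition Q'' (n + m) (\<pi> \<circ> \<tau>) Q"
  unfolding sheet_transition_def funpow_add comp_apply
proof (intro ballI impI)
  fix V e assume "V \<in> \<V>" "e \<in> V" "p e \<in> Q''"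
  then have "(g ^^ m) e \<in> \<tau> V" and "p ((g ^^ m) e) \<in> Q'" and "\<tau> V \<in> \<V>"
    using assms(1,3) unfolding sheet_transition_def by auto
  then show "(g ^^ n) ((g ^^ m) e) \<in> \<pi> (\<tau> V) \<and> p ((g ^^ n) ((g ^^ m) e)) \<in> Q"
    using assms(2) unfolding sheet_transition_def by blast
qed

lemma sheet_transition_chain:
  fixes j :: nat
  assumes "nonempty_open_subset Q"
  shows "\<exists>Q' T \<rho>. nonempty_open_subset Q' \<and> Q' \<subseteq> Q \<and>
    (\<forall>i\<le>j. bij_betw (\<rho> i) \<V> \<V> \<and> sheet_transition Q' (T i) (\<rho> i) Q) \<and>
    (\<forall>a b. a < b \<longrightarrow> b \<le> j \<longrightarrow> T a < T b)"
  using assms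
proof (induction j arbitrary: Q)
  case 0
  then show ?case
    using bij_betw_id sheet_transition_id[of Q Q]
    by (intro exI[of _ Q] exI[of _ "\<lambda>_. 0"] exI[of _ "\<lambda>_. id"]) (auto simp: id_def)
next
  case (Suc j)
  obtain Q1 n \<pi> where Q1: "nonempty_open_subset Q1" "Q1 \<subseteq> Q" and "n > 0"
    and \<pi>: "bij_betw \<pi> \<V> \<V>" "sheet_transition Q1 n \<pi> Q"
    using exists_sheet_transition[OF Suc.prems] .
  obtain Q' T \<rho> where "nonempty_open_subset Q'" "Q' \<subseteq> Q1"
    and \<rho>: "\<forall>i\<le>j. bij_betw (\<rho> i) \<V> \<V> \<and> sheet_transition Q' (T i) (\<rho> i) Q1"
    and T: "\<forall>a b. a < b \<longrightarrow> b \<le> j \<longrightarrow> T a < T b"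
    using Suc.IH[OF Q1(1)] by blast
  define T' where "T' i = (case i of 0 \<Rightarrow> 0 | Suc i \<Rightarrow> n + T i)" for i
  define \<rho>' where "\<rho>' i = (case i of 0 \<Rightarrow> id | Suc i \<Rightarrow> \<pi> \<circ> \<rho> i)" for i
  have "bij_betw (\<rho>' i) \<V> \<V> \<and> sheet_transition Q' (T' i) (\<rho>' i) Q" if "i \<le> Suc j" for i
  proof (cases i)
    case 0
    then show ?thesis
      using \<open>Q' \<subseteq> Q1\<close> Q1(2) sheet_transition_id[of Q' Q] unfolding T'_def \<rho>'_def by auto
  next
    case (Suc i')
    with that have "i' \<le> j"
      by simp
    with \<rho> have "bij_betw (\<rho> i') \<V> \<V>" and "sheet_transition Q' (T i') (\<rho> i') Q1"
      by blast+
    then have "bij_betw (\<pi> \<circ> \<rho> i') \<V> \<V>" and "sheet_transition Q' (n + T i') (\<pi> \<circ> \<rho> i') Q"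
      using \<pi> bij_betw_trans sheet_transition_comp bij_betw_imp_surj_on by (blast, metis order_refl)
    then show ?thesis
      unfolding T'_def \<rho>'_def Suc by simp
  qed
  moreover have "T' a < T' b" if "a < b" "b \<le> Suc j" for a b
    using that \<open>n > 0\<close> T unfolding T'_def by (cases a; cases b) auto
  ultimately show ?case
    using \<open>nonempty_open_subset Q'\<close> \<open>Q' \<subseteq> Q1\<close> Q1(2) by blast
qed

lemma sheet_recurrence:
  assumes "nonempty_open_subset Q" and "V \<in> \<V>"
  obtains e n where "e \<in> V" "p e \<in> Q" "n > 0" "(g ^^ n) e \<in> V" "p ((g ^^ n) e) \<in> Q"
proof -
  define N where "N = card (\<V> \<rightarrow>\<^sub>E \<V>)"
  obtain Q' T \<rho> where "nonempty_open_subset Q'"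
    and \<rho>: "\<forall>i\<le>N. bij_betw (\<rho> i) \<V> \<V> \<and> sheet_transition Q' (T i) (\<rho> i) Q"
    and T: "\<forall>a b. a < b \<longrightarrow> b \<le> N \<longrightarrow> T a < T b"
    using sheet_transition_chain[OF assms(1)] by blast
  have "\<rho> i ` \<V> \<subseteq> \<V>" if "i \<le> N" for i
    using \<rho> that bij_betw_imp_surj_on by blast
  then obtain a b where "a < b" "b \<le> N" and ab: "\<forall>V'\<in>\<V>. \<rho> a V' = \<rho> b V'"
    using pigeonhole_maps_finite_set[OF finite_sheets] unfolding N_def by blast
  have "V \<in> \<rho> a ` \<V>"
    using \<rho> \<open>a < b\<close> \<open>b \<le> N\<close> assms(2) by (simp add: bij_betw_def)
  then obtain \<sigma> where "\<sigma> \<in> \<V>" and "\<rho> a \<sigma> = V"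
    by blast
  moreover have "\<rho> b \<sigma> = V"
    using ab \<open>\<sigma> \<in> \<V>\<close> \<open>\<rho> a \<sigma> = V\<close> by simp
  moreover obtain e where "e \<in> \<sigma>" and "p e \<in> Q'"
    using \<open>nonempty_open_subset Q'\<close> \<open>\<sigma> \<in> \<V>\<close> sheet_image unfolding nonempty_open_subset_def by blast
  ultimately have "(g ^^ T a) e \<in> V \<and> p ((g ^^ T a) e) \<in> Q" "(g ^^ T b) e \<in> V \<and> p ((g ^^ T b) e) \<in> Q"
    using \<rho> \<open>a < b\<close> \<open>b \<le> N\<close> unfolding sheet_transition_def by auto
  moreover have "T a < T b"
    using T \<open>a < b\<close> \<open>b \<le> N\<close> by blast
  then have "(g ^^ (T b - T a)) ((g ^^ T a) e) = (g ^^ T b) e" and "T b - T a > 0"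
    by (simp_all flip: comp_apply[of "g ^^ (T b - T a)"] funpow_add)
  ultimately show thesis
    using that[of "(g ^^ T a) e" "T b - T a"] by simp
qed

lemma open_set_meeting_sheet_returns:
  assumes "V \<in> \<V>" and "openin Y W" and "W \<inter> V \<noteq> {}"
  shows "\<exists>n>0. (g ^^ n) ` W \<inter> W \<noteq> {}"
proof -
  have "openin X (p ` (W \<inter> V))"
    using openin_image_in_sheet[OF assms(1)] openin_Int[OF assms(2) openin_sheet[OF assms(1)]] by blast
  moreover have "p ` (W \<inter> V) \<subseteq> U"
    using sheet_image[OF assms(1)] by blast
  ultimately have "nonempty_open_subset (p ` (W \<inter> V))"
    unfolding nonempty_open_subset_def using assms(3) by blast
  then obtain e n where "e \<in> V" "p e \<in> p ` (W \<inter> V)" "n > 0"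
    and "(g ^^ n) e \<in> V" "p ((g ^^ n) e) \<in> p ` (W \<inter> V)"
    by (rule sheet_recurrence[OF _ assms(1)])
  moreover have "x \<in> W" if "x \<in> V" "p x \<in> p ` (W \<inter> V)" for x
    using inj_on_image_mem_iff[OF inj_on_sheet[OF assms(1)] that(1), of "W \<inter> V"] that(2) by blast
  ultimately have "e \<in> W" and "(g ^^ n) e \<in> W"
    by blast+
  with \<open>n > 0\<close> show ?thesis
    by blast
qed

end

theorem non_wandering_set_lift_finite_covering:
  assumes cover: "finite_covering_map Y X p"
    and "continuous_map Y Y g" and "inj_on g (topspace Y)"
    and "continuous_map X X h" and "non_wandering_set X h = topspace X"
    and "\<forall>y\<in>topspace Y. p (g y) = h (p y)"
  shows "non_wandering_set Y g = topspace Y"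
  unfolding non_wandering_set_eq_topspace_iff
proof (intro allI impI)
  fix W assume "openin Y W" "W \<noteq> {}"
  then obtain y where y: "y \<in> W" "y \<in> topspace Y"
    using openin_subset by blast
  have "continuous_map Y X p"
    using cover unfolding finite_covering_map_def by blast
  have "p y \<in> topspace X"
    using continuous_map_image_subset_topspace[OF \<open>continuous_map Y X p\<close>] y(2) by blast
  then obtain U \<V> where "p y \<in> U" and "evenly_covered Y X p U \<V>"
    by (rule finite_covering_map_evenly_covered[OF cover])
  then interpret evenly_covered_semiconjugacy Y X p U \<V> g h
    using assms(2-6)
    by (simp add: evenly_covered_semiconjugacy_def evenly_covered_semiconjugacy_axioms_def)
  obtain V where "V \<in> \<V>" "y \<in> V"
    using sheets_cover y \<open>p y \<in> U\<close> by blast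
  then show "\<exists>n>0. (g ^^ n) ` W \<inter> W \<noteq> {}"
    using open_set_meeting_sheet_returns \<open>openin Y W\<close> y by blast
qed

lemma inj_on_Suc_mod: "inj_on (\<lambda>i. Suc i mod k) {..<k}"
proof (rule inj_onI)
  fix i j assume "i \<in> {..<k}" "j \<in> {..<k}" "Suc i mod k = Suc j mod k"
  then show "i = j"
    by (metis Suc_inject Suc_lessI Zero_neq_Suc lessThan_iff mod_if mod_self)
qed

definition cyclic_lift :: "('a \<Rightarrow> 'a) \<Rightarrow> nat \<Rightarrow> 'a \<times> nat \<Rightarrow> 'a \<times> nat" where
  "cyclic_lift f k z = (f (fst z), Suc (snd z) mod k)"

lemma continuous_map_cyclic_lift:
  assumes "continuous_map X X f" and "k > 0"
  shows "continuous_map (prod_topology X (discrete_topology {..<k}))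
           (prod_topology X (discrete_topology {..<k})) (cyclic_lift f k)"
proof -
  let ?Y = "prod_topology X (discrete_topology {..<k})"
  have "continuous_map ?Y X (\<lambda>z. f (fst z))"
    using continuous_map_compose[OF continuous_map_fst assms(1)] by (simp add: o_def)
  moreover have "continuous_map ?Y (discrete_topology {..<k}) (\<lambda>z. Suc (snd z) mod k)"
  proof -
    have shift: "continuous_map (discrete_topology {..<k}) (discrete_topology {..<k}) (\<lambda>i. Suc i mod k)"
      using assms(2) by (simp add: Pi_iff)
    show ?thesis
      using continuous_map_compose[OF continuous_map_snd shift] by (simp add: o_def)
  qed
  ultimately show ?thesis
    unfolding cyclic_lift_def by (rule continuous_map_pairedI)
qed

lemma inj_on_cyclic_lift:
  assumes "inj_on f (topspace X)"
  shows "inj_on (cyclic_lift f k) (topspace (prod_topology X (discrete_topology {..<k})))"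
proof (rule inj_onI)
  fix z z' assume z: "z \<in> topspace (prod_topology X (discrete_topology {..<k}))"
    "z' \<in> topspace (prod_topology X (discrete_topology {..<k}))"
    and "cyclic_lift f k z = cyclic_lift f k z'"
  then have "f (fst z) = f (fst z')" and "Suc (snd z) mod k = Suc (snd z') mod k"
    unfolding cyclic_lift_def by simp_all
  moreover have "fst z \<in> topspace X" "fst z' \<in> topspace X" "snd z \<in> {..<k}" "snd z' \<in> {..<k}"
    using z by (simp_all add: mem_Times_iff)
  ultimately have "fst z = fst z'" and "snd z = snd z'"
    using inj_onD[OF assms] inj_onD[OF inj_on_Suc_mod[of k]] by blast+
  then show "z = z'"
    by (simp add: prod_eq_iff)
qed

lemma funpow_cyclic_lift: "(cyclic_lift f k ^^ n) (x, 0) = ((f ^^ n) x, n mod k)"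
  by (induction n) (simp_all add: cyclic_lift_def mod_Suc_eq)

lemma non_wandering_set_funpow:
  assumes "continuous_map X X f" and "inj_on f (topspace X)"
    and "non_wandering_set X f = topspace X" and "k > 0"
  shows "non_wandering_set X (f ^^ k) = topspace X"
  unfolding non_wandering_set_eq_topspace_iff
proof (intro allI impI)
  let ?Y = "prod_topology X (discrete_topology {..<k})"
  have "finite_covering_map ?Y X fst"
    using assms(4) by (intro finite_covering_map_fst_discrete) auto
  moreover have "\<forall>z\<in>topspace ?Y. fst (cyclic_lift f k z) = f (fst z)"
    unfolding cyclic_lift_def by simp
  ultimately have nw: "non_wandering_set ?Y (cyclic_lift f k) = topspace ?Y"
    using non_wandering_set_lift_finite_covering continuous_map_cyclic_lift inj_on_cyclic_lift assms
    by blast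
  fix W assume "openin X W" "W \<noteq> {}"
  then have "openin ?Y (W \<times> {0})" and "W \<times> {0} \<noteq> {}"
    using assms(4) by (simp_all add: openin_prod_Times_iff)
  then have "\<exists>n>0. (cyclic_lift f k ^^ n) ` (W \<times> {0}) \<inter> W \<times> {0} \<noteq> {}"
    by (rule nw[unfolded non_wandering_set_eq_topspace_iff, rule_format])
  then obtain n where "n > 0" and "(cyclic_lift f k ^^ n) ` (W \<times> {0}) \<inter> W \<times> {0} \<noteq> {}"
    by (elim exE conjE) (rule that)
  then obtain x where "x \<in> W" "(f ^^ n) x \<in> W" and "n mod k = 0"
    by (auto simp: funpow_cyclic_lift)
  then obtain m where "n = k * m"
    by (auto elim: dvdE)
  with \<open>n > 0\<close> \<open>(f ^^ n) x \<in> W\<close> have "m > 0" and "((f ^^ k) ^^ m) x \<in> W"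
    by (simp_all add: funpow_mult)
  with \<open>x \<in> W\<close> show "\<exists>m>0. ((f ^^ k) ^^ m) ` W \<inter> W \<noteq> {}"
    by blast
qed

theorem mainTheorem11:
  fixes M :: "'a topology" and M1 :: "'b topology"
    and f :: "'a \<Rightarrow> 'a" and g :: "'b \<Rightarrow> 'b" and p :: "'b \<Rightarrow> 'a" and k :: nat
  assumes "topological_manifold M" and "compact_space M"
    and "homeomorphic_map M M f"
    and "non_wandering_set M f = topspace M"
    and "finite_covering_map M1 M p"
    and "k \<ge> 1"
    and "homeomorphic_map M1 M1 g"
    and "\<forall>y \<in> topspace M1. p (g y) = (f ^^ k) (p y)"
  shows "non_wandering_set M1 g = topspace M1"
proof -
  have f: "continuous_map M M f" "inj_on f (topspace M)"
    using assms(3) homeomorphic_imp_continuous_map homeomorphic_imp_injective_map by blast+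
  have "non_wandering_set M (f ^^ k) = topspace M"
    using non_wandering_set_funpow[OF f assms(4)] assms(6) by simp
  moreover have "continuous_map M1 M1 g" "inj_on g (topspace M1)"
    using assms(7) homeomorphic_imp_continuous_map homeomorphic_imp_injective_map by blast+
  ultimately show ?thesis
    using non_wandering_set_lift_finite_covering[OF assms(5)] continuous_map_funpow[OF f(1)] assms(8)
    by blast
qed

end
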